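(* Let $y,l,u\in\mathcal{R}(\mathbb{R}^{+},\mathbb{R})$ be such that $l\leq u$, $l_0\leq y_0\leq u_0$, and $\inf_{s\leq t}(u_s-l_s)>0$ for every $t\geq 0$. Let $(\xi,\kappa)=RP_l(y)$. Then the function $\Theta^u_l(\xi)$ has bounded variation.
   Context: A function $f:\mathbb{R}^+=[0,\infty)\to\mathbb{R}$ is regulated if it has a left limit $f_{t^-}$ at every $t>0$ and a right limit $f_{t^+}$ at every $t\geq0$; $\mathcal{R}(\mathbb{R}^{+},\mathbb{R})$ is the set of regulated functions. $a\wedge b=\min(a,b)$, $a\vee b=\max(a,b)$, $a^+=a\vee0$. A function has bounded variation if it has finite total variation on every interval $[0,t]$. One-barrier problem $RP_l(y)$ (for $y,l$ regulated with $y_0\geq l_0$): the unique pair $(\xi,\kappa)$ with $\xi=y+\kappa\geq l$, $\kappa$ non-decreasing, right-continuous, $\kappa_0=0$, and $\int_{[0,\infty[}(\xi_s-l_s)\wedge(\xi_{s^+}-l_{s^+})\,d\kappa_s=0$; explicitly $\kappa_t=-\inf_{s\leq t}\big((y_s-l_s)\wedge(y_{s^+}-l_{s^+})\wedge0\big)$. For $f$ regulated: $\Theta^{u}_{l}(f)_t=\sup_{s\leq t}\Big(\big((f_s-u_s)\vee(f_{s^+}-u_{s^+})\big)^+\wedge\inf_{s\leq r\leq t}\big[\big((f_r-l_r)\wedge(f_{r^+}-l_{r^+})\big)\vee(f_r-u_r)\big]\Big)$. *)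

theory Defs
  imports "HOL-Analysis.Analysis"
begin

text \<open>Functions on R+ = [0,oo) are modelled as real => real; values at negative
  arguments are irrelevant for every notion below.\<close>

definition rlim :: "(real \<Rightarrow> real) \<Rightarrow> real \<Rightarrow> real" where
  "rlim f s = Lim (at_right s) f"

definition regulated :: "(real \<Rightarrow> real) \<Rightarrow> bool" where
  "regulated f \<longleftrightarrow> (\<forall>t>0. \<exists>L. (f \<longlongrightarrow> L) (at_left t)) \<and>
                    (\<forall>t\<ge>0. \<exists>L. (f \<longlongrightarrow> L) (at_right t))"

definition bv_on :: "(real \<Rightarrow> real) \<Rightarrow> real \<Rightarrow> real \<Rightarrow> bool" where
  "bv_on f a b \<longleftrightarrow> (\<exists>M. \<forall>(n::nat) (x::nat \<Rightarrow> real).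
      a \<le> x 0 \<and> x n \<le> b \<and> (\<forall>i<n. x i \<le> x (Suc i)) \<longrightarrow>
      (\<Sum>i<n. \<bar>f (x (Suc i)) - f (x i)\<bar>) \<le> M)"

definition bounded_variation :: "(real \<Rightarrow> real) \<Rightarrow> bool" where
  "bounded_variation f \<longleftrightarrow> (\<forall>t\<ge>0. bv_on f 0 t)"

text \<open>Regulator kappa of the one-barrier problem RP_l(y) (explicit formula) and xi = y + kappa.\<close>
definition RP_kappa :: "(real \<Rightarrow> real) \<Rightarrow> (real \<Rightarrow> real) \<Rightarrow> real \<Rightarrow> real" where
  "RP_kappa l y t = - (INF s\<in>{0..t}. min (min (y s - l s) (rlim y s - rlim l s)) 0)"

definition RP_xi :: "(real \<Rightarrow> real) \<Rightarrow> (real \<Rightarrow> real) \<Rightarrow> real \<Rightarrow> real" where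
  "RP_xi l y t = y t + RP_kappa l y t"

definition Theta :: "(real \<Rightarrow> real) \<Rightarrow> (real \<Rightarrow> real) \<Rightarrow> (real \<Rightarrow> real) \<Rightarrow> real \<Rightarrow> real" where
  "Theta u l f t = (SUP s\<in>{0..t}.
      min (max (max (f s - u s) (rlim f s - rlim u s)) 0)
          (INF r\<in>{s..t}. max (min (f r - l r) (rlim f r - rlim l r)) (f r - u r)))"

end

theory Submission
  imports Defs
begin

text \<open>\<open>\<Theta>\<^sup>u\<^sub>l(f)\<close> is the running supremum over \<open>s \<le> t\<close> of \<open>min (A s) (INF r\<in>{s..t}. B r)\<close>,
  where \<open>A\<close> is the excess of \<open>f\<close> over the upper barrier \<open>u\<close> and \<open>B\<close> the margin of \<open>f\<close> above
  the lower barrier \<open>l\<close> (or above \<open>u\<close>). For \<open>f = \<xi>\<close> the margin is nonnegative, because \<open>\<xi>\<close> and its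
  right limits stay above \<open>l\<close>. Near every point, \<open>f\<close>, \<open>l\<close> and \<open>u\<close> are almost constant on short
  one-sided windows, and since \<open>u - l\<close> is bounded away from \<open>0\<close> on compacts, on each such window
  either \<open>A\<close> vanishes or \<open>A\<close> nowhere exceeds \<open>B\<close>. Either way the inner infimum is inactive, and on
  the window \<open>\<Theta>\<close> is the maximum of a non-increasing and a non-decreasing bounded function, hence a
  difference of monotone functions. Bolzano's bisection principle glues these local decompositions
  into one on \<open>[0, T]\<close>, which bounds the total variation.\<close>

subsection \<open>Differences of monotone functions\<close>

definition mono_diff_on :: "(real \<Rightarrow> real) \<Rightarrow> real \<Rightarrow> real \<Rightarrow> bool" where
  "mono_diff_on g a b \<longleftrightarrow>
     (\<exists>P N. mono_on {a..b} P \<and> mono_on {a..b} N \<and> (\<forall>x\<in>{a..b}. g x = P x - N x))"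

lemma bv_on_if_mono_diff_on:
  assumes "mono_diff_on g a b"
  shows "bv_on g a b"
proof -
  obtain P N where P: "mono_on {a..b} P" and N: "mono_on {a..b} N"
    and g: "\<forall>x\<in>{a..b}. g x = P x - N x"
    using assms unfolding mono_diff_on_def by blast
  show ?thesis unfolding bv_on_def
  proof (intro exI allI impI)
    fix n and x :: "nat \<Rightarrow> real"
    assume x: "a \<le> x 0 \<and> x n \<le> b \<and> (\<forall>i<n. x i \<le> x (Suc i))"
    have x_mono: "x i \<le> x j" if "i \<le> j" "j \<le> n" for i j
      by (rule lift_Suc_mono_le_ivl[of "{..<n}"]) (use x that in auto)
    have x_in: "x i \<in> {a..b}" if "i \<le> n" for i
      using x_mono[of 0 i] x_mono[of i n] x that by auto
    have "(\<Sum>i<n. \<bar>g (x (Suc i)) - g (x i)\<bar>)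
        \<le> (\<Sum>i<n. (P (x (Suc i)) - P (x i)) + (N (x (Suc i)) - N (x i)))"
    proof (rule sum_mono)
      fix i assume "i \<in> {..<n}"
      then have "x i \<in> {a..b}" "x (Suc i) \<in> {a..b}" "x i \<le> x (Suc i)"
        using x_in x by auto
      then have "P (x i) \<le> P (x (Suc i))" "N (x i) \<le> N (x (Suc i))"
        "g (x i) = P (x i) - N (x i)" "g (x (Suc i)) = P (x (Suc i)) - N (x (Suc i))"
        using P N g by (auto intro: mono_onD)
      then show "\<bar>g (x (Suc i)) - g (x i)\<bar> \<le> (P (x (Suc i)) - P (x i)) + (N (x (Suc i)) - N (x i))"
        by linarith
    qed
    also have "\<dots> = (P (x n) - P (x 0)) + (N (x n) - N (x 0))"
      by (simp add: sum.distrib sum_lessThan_telescope[of "\<lambda>i. P (x i)"]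
          sum_lessThan_telescope[of "\<lambda>i. N (x i)"])
    also have "\<dots> \<le> (P b - P a) + (N b - N a)"
    proof -
      have "a \<le> b" using x_in[of 0] by auto
      then have "P (x n) \<le> P b" "P a \<le> P (x 0)" "N (x n) \<le> N b" "N a \<le> N (x 0)"
        using x_in[of 0] x_in[of n] P N by (auto intro: mono_onD)
      then show ?thesis by linarith
    qed
    finally show "(\<Sum>i<n. \<bar>g (x (Suc i)) - g (x i)\<bar>) \<le> (P b - P a) + (N b - N a)" .
  qed
qed

lemma mono_diff_on_refl: "mono_diff_on g a a"
  unfolding mono_diff_on_def
  by (rule exI[of _ g], rule exI[of _ "\<lambda>_. 0"]) (auto simp: mono_on_def)

lemma mono_on_glue:
  fixes f g :: "'a::linorder \<Rightarrow> real"
  assumes "mono_on {a..b} f" "mono_on {b..c} g"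
  shows "mono_on {a..c} (\<lambda>x. if x \<le> b then f x else g x + (f b - g b))"
proof (rule mono_onI)
  fix r s assume rs: "r \<in> {a..c}" "s \<in> {a..c}" "r \<le> s"
  consider "s \<le> b" | "r \<le> b" "b < s" | "b < r" by (meson not_le)
  then show "(if r \<le> b then f r else g r + (f b - g b)) \<le> (if s \<le> b then f s else g s + (f b - g b))"
  proof cases
    case 2
    then have "f r \<le> f b" "g b \<le> g s" using rs assms by (auto intro: mono_onD)
    then show ?thesis using 2 by auto
  qed (use rs assms in \<open>auto intro: mono_onD\<close>)
qed

lemma mono_diff_on_glue:
  assumes "mono_diff_on g a b" "mono_diff_on g b c" "a \<le> b"
  shows "mono_diff_on g a c"
proof -
  obtain P1 N1 where 1: "mono_on {a..b} P1" "mono_on {a..b} N1" "\<forall>x\<in>{a..b}. g x = P1 x - N1 x"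
    using assms(1) unfolding mono_diff_on_def by blast
  obtain P2 N2 where 2: "mono_on {b..c} P2" "mono_on {b..c} N2" "\<forall>x\<in>{b..c}. g x = P2 x - N2 x"
    using assms(2) unfolding mono_diff_on_def by blast
  have "\<forall>x\<in>{a..c}. g x = (if x \<le> b then P1 x else P2 x + (P1 b - P2 b))
                        - (if x \<le> b then N1 x else N2 x + (N1 b - N2 b))"
  proof
    fix x assume "x \<in> {a..c}"
    moreover have "P1 b - N1 b = P2 b - N2 b" if "b \<le> c"
      using 1(3) 2(3) assms(3) that by force
    ultimately show "g x = (if x \<le> b then P1 x else P2 x + (P1 b - P2 b))
                   - (if x \<le> b then N1 x else N2 x + (N1 b - N2 b))"
      using 1(3) 2(3) by (cases "x \<le> b") auto
  qed
  then show ?thesis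
    unfolding mono_diff_on_def using mono_on_glue 1 2 by blast
qed

lemma mono_on_extend_endpoints:
  fixes f :: "'a::linorder \<Rightarrow> 'b::order"
  assumes "mono_on {a<..<b} f" "lo \<le> hi" "\<forall>x\<in>{a<..<b}. lo \<le> f x \<and> f x \<le> hi"
  shows "mono_on {a..b} (\<lambda>x. if x = a then lo else if x = b then hi else f x)"
proof (rule mono_onI)
  fix r s assume rs: "r \<in> {a..b}" "s \<in> {a..b}" "r \<le> s"
  show "(if r = a then lo else if r = b then hi else f r) \<le> (if s = a then lo else if s = b then hi else f s)"
  proof (cases "r = a \<or> s = b")
    case False
    then have "a < r" "s < b" using rs by auto
    then show ?thesis using mono_onD[OF assms(1)] rs by auto
  qed (use assms(2,3) rs in auto)
qed

lemma mono_diff_on_if_open: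
  assumes "a < b" "mono_on {a<..<b} P" "mono_on {a<..<b} N"
    and bounded: "\<forall>x\<in>{a<..<b}. \<bar>P x\<bar> \<le> M \<and> \<bar>N x\<bar> \<le> M"
    and g: "\<forall>x\<in>{a<..<b}. g x = P x - N x"
  shows "mono_diff_on g a b"
proof -
  define lo where "lo = - M - \<bar>g a\<bar>"
  define hi where "hi = M + \<bar>g b\<bar>"
  have "\<bar>P ((a + b) / 2)\<bar> \<le> M" using bounded assms(1) by auto
  then have "0 \<le> M" by linarith
  then have "mono_on {a..b} (\<lambda>x. if x = a then lo else if x = b then hi else P x)"
    "mono_on {a..b} (\<lambda>x. if x = a then lo - g a else if x = b then hi - g b else N x)"
    using assms(2,3) bounded
    by (auto intro!: mono_on_extend_endpoints simp: lo_def hi_def abs_le_iff)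
  moreover have "\<forall>x\<in>{a..b}. g x = (if x = a then lo else if x = b then hi else P x)
                                - (if x = a then lo - g a else if x = b then hi - g b else N x)"
    using g assms(1) by auto
  ultimately show ?thesis unfolding mono_diff_on_def by blast
qed

lemma mono_diff_on_max:
  assumes "a < b" "antimono_on {a<..<b} P" "mono_on {a<..<b} Q"
    and "\<forall>x\<in>{a<..<b}. \<bar>P x\<bar> \<le> M \<and> \<bar>Q x\<bar> \<le> M"
    and "\<forall>x\<in>{a<..<b}. g x = max (P x) (Q x)"
  shows "mono_diff_on g a b"
proof (rule mono_diff_on_if_open[OF assms(1,3), of "\<lambda>x. min (Q x - P x) 0" "2 * M"])
  show "mono_on {a<..<b} (\<lambda>x. min (Q x - P x) 0)"
    using assms(2,3) by (intro mono_onI) (fastforce simp: monotone_on_def)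
qed (use assms(4,5) in \<open>auto simp: abs_le_iff\<close>)

text \<open>Windows may reach beyond \<open>T\<close> (up to \<open>T + 1\<close>) so that right windows at points of \<open>[0, T]\<close>
  need not be cut at \<open>T\<close>; left windows are cut at \<open>0\<close>, below which nothing is assumed.\<close>

lemma mono_diff_on_from_windows:
  fixes G :: "real \<Rightarrow> real \<Rightarrow> bool"
  assumes "0 \<le> T"
    and window: "\<And>a b. 0 \<le> a \<Longrightarrow> a < b \<Longrightarrow> b \<le> T + 1 \<Longrightarrow> G a b \<Longrightarrow> mono_diff_on g a b"
    and shrink: "\<And>a b a' b'. G a b \<Longrightarrow> a \<le> a' \<Longrightarrow> b' \<le> b \<Longrightarrow> G a' b'"
    and around: "\<And>c. 0 \<le> c \<Longrightarrow> c \<le> T \<Longrightarrow> \<exists>d>0. G (max 0 (c - d)) c \<and> G c (c + d)"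
  shows "mono_diff_on g 0 T"
proof -
  have "0 \<le> (0::real) \<longrightarrow> mono_diff_on g 0 T"
  proof (rule Bolzano[where P = "\<lambda>a b. 0 \<le> a \<longrightarrow> mono_diff_on g a b", OF \<open>0 \<le> T\<close>])
    fix a b c :: real
    assume "0 \<le> a \<longrightarrow> mono_diff_on g a b" "0 \<le> b \<longrightarrow> mono_diff_on g b c" "a \<le> b" "b \<le> c"
    then show "0 \<le> a \<longrightarrow> mono_diff_on g a c" using mono_diff_on_glue by auto
  next
    fix x :: real assume x: "0 \<le> x" "x \<le> T"
    obtain d where d: "d > 0" "G (max 0 (x - d)) x" "G x (x + d)" using around[OF x] by blast
    have "mono_diff_on g a b" if ab: "a \<le> x" "x \<le> b" "b - a < min d 1" "0 \<le> a" for a b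
    proof -
      have left: "mono_diff_on g a x"
      proof (cases "a = x")
        case False
        then show ?thesis using ab x by (intro window shrink[OF d(2)]) auto
      qed (simp add: mono_diff_on_refl)
      have right: "mono_diff_on g x b"
      proof (cases "x = b")
        case False
        then show ?thesis using ab x by (intro window shrink[OF d(3)]) auto
      qed (simp add: mono_diff_on_refl)
      show ?thesis using mono_diff_on_glue[OF left right ab(1)] .
    qed
    then show "\<exists>e>0. \<forall>a b. a \<le> x \<and> x \<le> b \<and> b - a < e \<longrightarrow> 0 \<le> a \<longrightarrow> mono_diff_on g a b"
      using d(1) by (intro exI[of _ "min d 1"]) auto
  qed
  then show ?thesis by simp
qed

subsection \<open>Regulated functions\<close>

lemma rlim_tendsto:
  assumes "regulated g" "0 \<le> x"
  shows "(g \<longlongrightarrow> rlim g x) (at_right x)"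
proof -
  obtain L where L: "(g \<longlongrightarrow> L) (at_right x)" using assms unfolding regulated_def by blast
  then have "rlim g x = L" unfolding rlim_def by (intro tendsto_Lim) auto
  with L show ?thesis by simp
qed

lemma regulated_add:
  assumes "regulated f" "regulated g"
  shows "regulated (\<lambda>t. f t + g t)"
  using assms unfolding regulated_def by (metis tendsto_add)

lemma regulated_diff:
  assumes "regulated f" "regulated g"
  shows "regulated (\<lambda>t. f t - g t)"
  using assms unfolding regulated_def by (metis tendsto_diff)

lemma rlim_add:
  assumes "regulated f" "regulated g" "0 \<le> x"
  shows "rlim (\<lambda>t. f t + g t) x = rlim f x + rlim g x"
  unfolding rlim_def[of "\<lambda>t. f t + g t"]
  by (rule tendsto_Lim) (auto intro: tendsto_add rlim_tendsto assms)

lemma rlim_dist_le: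
  assumes "regulated g" "0 \<le> x" "x < b" "\<forall>z\<in>{x<..<b}. \<bar>g z - L\<bar> \<le> \<eta>"
  shows "\<bar>rlim g x - L\<bar> \<le> \<eta>"
proof (rule tendsto_upperbound)
  show "((\<lambda>z. \<bar>g z - L\<bar>) \<longlongrightarrow> \<bar>rlim g x - L\<bar>) (at_right x)"
    by (intro tendsto_intros rlim_tendsto assms(1,2))
  show "\<forall>\<^sub>F z in at_right x. \<bar>g z - L\<bar> \<le> \<eta>"
    using assms(3,4) by (intro eventually_at_rightI[of x b]) auto
qed simp

definition near_const_on :: "(real \<Rightarrow> real) \<Rightarrow> real \<Rightarrow> real \<Rightarrow> real \<Rightarrow> bool" where
  "near_const_on g \<eta> a b \<longleftrightarrow> (\<exists>L. \<forall>x\<in>{a<..<b}. \<bar>g x - L\<bar> \<le> \<eta> \<and> \<bar>rlim g x - L\<bar> \<le> \<eta>)"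

lemma near_const_on_subset:
  "near_const_on g \<eta> a b \<Longrightarrow> a \<le> a' \<Longrightarrow> b' \<le> b \<Longrightarrow> near_const_on g \<eta> a' b'"
  unfolding near_const_on_def by force

lemma near_const_onI:
  assumes "regulated g" "0 \<le> a" "\<forall>z\<in>{a<..<b}. \<bar>g z - L\<bar> \<le> \<eta>"
  shows "near_const_on g \<eta> a b"
  unfolding near_const_on_def
proof (intro exI ballI conjI)
  fix x assume x: "x \<in> {a<..<b}"
  then show "\<bar>g x - L\<bar> \<le> \<eta>" using assms(3) by blast
  show "\<bar>rlim g x - L\<bar> \<le> \<eta>"
    using x assms by (intro rlim_dist_le[of _ _ b]) auto
qed

lemma regulated_near_const:
  assumes "regulated g" "0 \<le> c" "0 < \<eta>"
  shows "\<exists>d>0. near_const_on g \<eta> (max 0 (c - d)) c \<and> near_const_on g \<eta> c (c + d)"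
proof -
  have "\<forall>\<^sub>F z in at_right c. dist (g z) (rlim g c) < \<eta>"
    using tendstoD[OF rlim_tendsto[OF assms(1,2)] assms(3)] .
  then obtain b where b: "c < b" "\<forall>z. c < z \<longrightarrow> z < b \<longrightarrow> \<bar>g z - rlim g c\<bar> < \<eta>"
    unfolding eventually_at_right_field dist_real_def by blast
  have right: "near_const_on g \<eta> c b"
    using b assms by (intro near_const_onI[of _ _ _ "rlim g c"]) auto
  obtain dL where dL: "dL > 0" "near_const_on g \<eta> (max 0 (c - dL)) c"
  proof (cases "c = 0")
    case True
    then show ?thesis using that[of 1] by (simp add: near_const_on_def)
  next
    case False
    then obtain L where "(g \<longlongrightarrow> L) (at_left c)"
      using assms(1,2) unfolding regulated_def by force
    from tendstoD[OF this assms(3)] obtain a where a: "a < c" "\<forall>z. a < z \<longrightarrow> z < c \<longrightarrow> \<bar>g z - L\<bar> < \<eta>"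
      unfolding eventually_at_left_field dist_real_def by blast
    have "near_const_on g \<eta> (max 0 a) c"
      using a assms by (intro near_const_onI[of _ _ _ L]) auto
    moreover have "max 0 (c - (c - max 0 a)) = max 0 a" by simp
    ultimately show ?thesis using that[of "c - max 0 a"] a(1) False assms(2) by auto
  qed
  show ?thesis
    using dL right b(1)
    by (intro exI[of _ "min dL (b - c)"]) (auto elim: near_const_on_subset)
qed

lemma regulated_near_const_finite:
  assumes "finite F" "\<forall>g\<in>F. regulated g" "0 \<le> c" "0 < \<eta>"
  shows "\<exists>d>0. \<forall>g\<in>F. near_const_on g \<eta> (max 0 (c - d)) c \<and> near_const_on g \<eta> c (c + d)"
  using assms(1,2)
proof (induction F rule: finite_induct)
  case empty
  show ?case by (intro exI[of _ 1]) simp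
next
  case (insert g F)
  obtain d1 where d1: "d1 > 0" "near_const_on g \<eta> (max 0 (c - d1)) c" "near_const_on g \<eta> c (c + d1)"
    using regulated_near_const insert.prems assms(3,4) by blast
  obtain d2 where d2: "d2 > 0"
    "\<forall>h\<in>F. near_const_on h \<eta> (max 0 (c - d2)) c \<and> near_const_on h \<eta> c (c + d2)"
    using insert.IH insert.prems by blast
  have "max 0 (c - e) \<le> max 0 (c - min d1 d2)" "c + min d1 d2 \<le> c + e" if "e \<in> {d1, d2}" for e
    using that by auto
  then show ?case
    using d1 d2 by (intro exI[of _ "min d1 d2"]) (auto intro: near_const_on_subset)
qed

lemma regulated_bounded:
  assumes "regulated g"
  shows "\<exists>M. \<forall>x\<in>{0..T}. \<bar>g x\<bar> \<le> M \<and> \<bar>rlim g x\<bar> \<le> M"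
proof (cases "0 \<le> T")
  case True
  let ?bounded = "\<lambda>a b. \<exists>M. \<forall>x\<in>{a..b}. \<bar>g x\<bar> \<le> M \<and> \<bar>rlim g x\<bar> \<le> M"
  have "0 \<le> (0::real) \<longrightarrow> ?bounded 0 T"
  proof (rule Bolzano[where P = "\<lambda>a b. 0 \<le> a \<longrightarrow> ?bounded a b", OF True])
    fix a b c :: real
    assume ab: "0 \<le> a \<longrightarrow> ?bounded a b" and bc: "0 \<le> b \<longrightarrow> ?bounded b c" and "a \<le> b"
    show "0 \<le> a \<longrightarrow> ?bounded a c"
    proof
      assume "0 \<le> a"
      then obtain M1 M2 where "\<forall>x\<in>{a..b}. \<bar>g x\<bar> \<le> M1 \<and> \<bar>rlim g x\<bar> \<le> M1"
        "\<forall>x\<in>{b..c}. \<bar>g x\<bar> \<le> M2 \<and> \<bar>rlim g x\<bar> \<le> M2"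
        using ab bc \<open>a \<le> b\<close> by auto
      then have "\<forall>x\<in>{a..c}. \<bar>g x\<bar> \<le> max M1 M2 \<and> \<bar>rlim g x\<bar> \<le> max M1 M2"
        by (metis atLeastAtMost_iff linorder_le_cases max.coboundedI1 max.coboundedI2)
      then show "?bounded a c" by blast
    qed
  next
    fix x :: real assume x: "0 \<le> x" "x \<le> T"
    obtain d where d: "d > 0" "near_const_on g 1 (max 0 (x - d)) x" "near_const_on g 1 x (x + d)"
      using regulated_near_const[OF assms x(1), of 1] by auto
    obtain L1 L2 where
      L1: "\<forall>z\<in>{max 0 (x - d)<..<x}. \<bar>g z - L1\<bar> \<le> 1 \<and> \<bar>rlim g z - L1\<bar> \<le> 1" and
      L2: "\<forall>z\<in>{x<..<x + d}. \<bar>g z - L2\<bar> \<le> 1 \<and> \<bar>rlim g z - L2\<bar> \<le> 1"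
      using d(2,3) unfolding near_const_on_def by blast
    define M where "M = max (max (\<bar>L1\<bar> + 1) (\<bar>L2\<bar> + 1)) (max (max \<bar>g x\<bar> \<bar>rlim g x\<bar>) (max \<bar>g 0\<bar> \<bar>rlim g 0\<bar>))"
    have "\<bar>g z\<bar> \<le> M \<and> \<bar>rlim g z\<bar> \<le> M" if "0 \<le> z" "x - d < z" "z < x + d" for z
    proof (cases z x rule: linorder_cases)
      case less
      show ?thesis
      proof (cases "z = 0")
        case False
        then have "\<bar>g z - L1\<bar> \<le> 1" "\<bar>rlim g z - L1\<bar> \<le> 1" using L1 less that by auto
        then have "\<bar>g z\<bar> \<le> \<bar>L1\<bar> + 1" "\<bar>rlim g z\<bar> \<le> \<bar>L1\<bar> + 1" by linarith+
        then show ?thesis unfolding M_def by (simp add: le_max_iff_disj)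
      qed (simp add: M_def le_max_iff_disj)
    next
      case greater
      then have "\<bar>g z - L2\<bar> \<le> 1" "\<bar>rlim g z - L2\<bar> \<le> 1" using L2 that by auto
      then have "\<bar>g z\<bar> \<le> \<bar>L2\<bar> + 1" "\<bar>rlim g z\<bar> \<le> \<bar>L2\<bar> + 1" by linarith+
      then show ?thesis unfolding M_def by (simp add: le_max_iff_disj)
    qed (simp add: M_def le_max_iff_disj)
    then have "?bounded a b" if "a \<le> x" "x \<le> b" "b - a < d" "0 \<le> a" for a b
      using that by (intro exI[of _ M]) auto
    then show "\<exists>e>0. \<forall>a b. a \<le> x \<and> x \<le> b \<and> b - a < e \<longrightarrow> 0 \<le> a \<longrightarrow> ?bounded a b"
      using d(1) by blast
  qed
  then show ?thesis by simp
qed simp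

lemma regulated_if_mono_on:
  assumes "mono_on {0..} g"
  shows "regulated g"
  unfolding regulated_def
proof (intro conjI allI impI)
  fix x :: real assume x: "0 < x"
  have "(g \<longlongrightarrow> Sup (g ` ({..<x} \<inter> {0..}))) (at x within {..<x} \<inter> {0..})"
    using x by (intro Lim_left_bound[where K = "g x"]) (auto intro: mono_onD[OF assms])
  moreover have "at x within {..<x} \<inter> {0..} = at_left x"
    using x by (intro at_within_nhd[of x "{0<..}"]) auto
  ultimately show "\<exists>L. (g \<longlongrightarrow> L) (at_left x)" by auto
next
  fix x :: real assume x: "0 \<le> x"
  have "(g \<longlongrightarrow> Inf (g ` ({x<..} \<inter> {0..}))) (at x within {x<..} \<inter> {0..})"
    using x by (intro Lim_right_bound[where K = "g x"]) (auto intro: mono_onD[OF assms])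
  moreover have "{x<..} \<inter> {0..} = {x<..}" using x by auto
  ultimately show "\<exists>L. (g \<longlongrightarrow> L) (at_right x)" by auto
qed

lemma rlim_ge_if_mono_on:
  assumes "mono_on {0..} g" "0 \<le> x"
  shows "g x \<le> rlim g x"
proof (rule tendsto_lowerbound)
  show "(g \<longlongrightarrow> rlim g x) (at_right x)"
    using rlim_tendsto[OF regulated_if_mono_on[OF assms(1)] assms(2)] .
  show "\<forall>\<^sub>F z in at_right x. g x \<le> g z"
    using assms by (intro eventually_at_rightI[of x "x + 1"]) (auto intro: mono_onD)
qed simp

subsection \<open>The one-barrier problem\<close>

definition RP_defect :: "(real \<Rightarrow> real) \<Rightarrow> (real \<Rightarrow> real) \<Rightarrow> real \<Rightarrow> real" where
  "RP_defect l y s = min (min (y s - l s) (rlim y s - rlim l s)) 0"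

lemma RP_kappa_eq: "RP_kappa l y t = - (INF s\<in>{0..t}. RP_defect l y s)"
  unfolding RP_kappa_def RP_defect_def ..

lemma bdd_below_RP_defect:
  assumes "regulated y" "regulated l"
  shows "bdd_below (RP_defect l y ` {0..t})"
proof -
  obtain My where My: "\<forall>x\<in>{0..t}. \<bar>y x\<bar> \<le> My \<and> \<bar>rlim y x\<bar> \<le> My"
    using regulated_bounded[OF assms(1)] by blast
  obtain Ml where Ml: "\<forall>x\<in>{0..t}. \<bar>l x\<bar> \<le> Ml \<and> \<bar>rlim l x\<bar> \<le> Ml"
    using regulated_bounded[OF assms(2)] by blast
  show ?thesis
  proof (rule bdd_belowI2)
    fix s assume "s \<in> {0..t}"
    then have "\<bar>y s\<bar> \<le> My" "\<bar>rlim y s\<bar> \<le> My" "\<bar>l s\<bar> \<le> Ml" "\<bar>rlim l s\<bar> \<le> Ml"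
      using My Ml by auto
    then show "- My - Ml \<le> RP_defect l y s"
      unfolding RP_defect_def by (auto simp: abs_le_iff)
  qed
qed

lemma RP_kappa_ge_defect:
  assumes "regulated y" "regulated l" "0 \<le> s" "s \<le> t"
  shows "- RP_defect l y s \<le> RP_kappa l y t"
  unfolding RP_kappa_eq using assms by (simp add: cINF_lower bdd_below_RP_defect)

lemma RP_kappa_mono:
  assumes "regulated y" "regulated l"
  shows "mono_on {0..} (RP_kappa l y)"
proof (rule mono_onI)
  fix s t :: real assume "s \<in> {0..}" "t \<in> {0..}" "s \<le> t"
  then show "RP_kappa l y s \<le> RP_kappa l y t"
    unfolding RP_kappa_eq
    using cINF_superset_mono[OF _ bdd_below_RP_defect[OF assms, of t], of "{0..s}"] by auto
qed

lemma regulated_RP_xi: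
  assumes "regulated y" "regulated l"
  shows "regulated (RP_xi l y)"
  unfolding RP_xi_def
  by (intro regulated_add assms(1) regulated_if_mono_on RP_kappa_mono assms)

lemma RP_xi_ge_barrier:
  assumes "regulated y" "regulated l" "0 \<le> t"
  shows "l t \<le> RP_xi l y t"
  using RP_kappa_ge_defect[OF assms(1,2,3) order.refl]
  by (simp add: RP_xi_def RP_defect_def)

lemma rlim_RP_xi_ge_barrier:
  assumes "regulated y" "regulated l" "0 \<le> t"
  shows "rlim l t \<le> rlim (RP_xi l y) t"
proof -
  have mono: "mono_on {0..} (RP_kappa l y)" using RP_kappa_mono[OF assms(1,2)] .
  have "rlim (RP_xi l y) t = rlim y t + rlim (RP_kappa l y) t"
    unfolding RP_xi_def[abs_def]
    using rlim_add[OF assms(1) regulated_if_mono_on[OF mono] assms(3)] by simp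
  moreover have "- RP_defect l y t \<le> rlim (RP_kappa l y) t"
    using RP_kappa_ge_defect[OF assms(1,2,3) order.refl] rlim_ge_if_mono_on[OF mono assms(3)]
    by linarith
  ultimately show ?thesis by (simp add: RP_defect_def)
qed

subsection \<open>Running suprema of minima of running infima\<close>

definition sup_min_inf :: "(real \<Rightarrow> real) \<Rightarrow> (real \<Rightarrow> real) \<Rightarrow> real \<Rightarrow> real" where
  "sup_min_inf A B t = (SUP s\<in>{0..t}. min (A s) (INF r\<in>{s..t}. B r))"

lemma cSUP_min_const:
  fixes g :: "'a \<Rightarrow> real"
  assumes "S \<noteq> {}" "bdd_above (g ` S)"
  shows "(SUP s\<in>S. min (g s) c) = min (SUP s\<in>S. g s) c"
proof (rule antisym)
  show "(SUP s\<in>S. min (g s) c) \<le> min (SUP s\<in>S. g s) c"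
    using assms by (intro cSUP_least) (auto intro: cSUP_upper2)
  have bdd: "bdd_above ((\<lambda>s. min (g s) c) ` S)"
    using assms(2) by (auto simp: bdd_above_def intro: min.coboundedI1 order.trans)
  show "min (SUP s\<in>S. g s) c \<le> (SUP s\<in>S. min (g s) c)"
  proof (cases "c < (SUP s\<in>S. g s)")
    case True
    then obtain s where "s \<in> S" "c < g s" using less_cSUP_iff[OF assms] by blast
    then have "c \<le> (SUP s\<in>S. min (g s) c)" using bdd by (intro cSUP_upper2) auto
    then show ?thesis by simp
  next
    case False
    then have "g s \<le> min (g s) c" if "s \<in> S" for s
      using cSUP_upper[OF that assms(2)] by simp
    then have "(SUP s\<in>S. g s) \<le> (SUP s\<in>S. min (g s) c)"
      using assms(1) bdd by (intro cSUP_mono) auto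
    then show ?thesis by simp
  qed
qed

lemma bdd_image_if_abs_le:
  fixes f :: "'a \<Rightarrow> real"
  assumes "\<forall>x\<in>S. \<bar>f x\<bar> \<le> M"
  shows "bdd_above (f ` S)" "bdd_below (f ` S)"
  using assms by (auto intro!: bdd_aboveI2[where M = M] bdd_belowI2[where m = "-M"] simp: abs_le_iff)

lemma abs_SUP_le:
  fixes f :: "'a \<Rightarrow> real"
  assumes "S \<noteq> {}" "\<forall>x\<in>S. \<bar>f x\<bar> \<le> M"
  shows "\<bar>SUP x\<in>S. f x\<bar> \<le> M"
proof -
  obtain x where "x \<in> S" using assms(1) by blast
  then have "-M \<le> (SUP x\<in>S. f x)"
    using assms(2) bdd_image_if_abs_le(1)[OF assms(2)] by (force simp: abs_le_iff intro: cSUP_upper2)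
  moreover have "(SUP x\<in>S. f x) \<le> M" using assms by (intro cSUP_least) (auto simp: abs_le_iff)
  ultimately show ?thesis by simp
qed

lemma abs_INF_le:
  fixes f :: "'a \<Rightarrow> real"
  assumes "S \<noteq> {}" "\<forall>x\<in>S. \<bar>f x\<bar> \<le> M"
  shows "\<bar>INF x\<in>S. f x\<bar> \<le> M"
proof -
  obtain x where "x \<in> S" using assms(1) by blast
  then have "(INF x\<in>S. f x) \<le> M"
    using assms(2) bdd_image_if_abs_le(2)[OF assms(2)] by (force simp: abs_le_iff intro: cINF_lower2)
  moreover have "-M \<le> (INF x\<in>S. f x)" using assms by (intro cINF_greatest) (auto simp: abs_le_iff)
  ultimately show ?thesis by simp
qed

context
  fixes A B :: "real \<Rightarrow> real" and M T :: real
  assumes bounded: "\<forall>s\<in>{0..T}. \<bar>A s\<bar> \<le> M \<and> \<bar>B s\<bar> \<le> M"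
begin

lemma abs_min_INF_le:
  assumes "0 \<le> s" "s \<le> t" "t \<le> T"
  shows "\<bar>min (A s) (INF r\<in>{s..t}. B r)\<bar> \<le> M"
proof -
  have "\<bar>INF r\<in>{s..t}. B r\<bar> \<le> M" using assms bounded by (intro abs_INF_le) auto
  moreover have "\<bar>A s\<bar> \<le> M" using assms bounded by auto
  ultimately show ?thesis by (auto simp: abs_le_iff)
qed

lemma bdd_above_min_INF:
  assumes "t \<le> T" "S \<subseteq> {0..t}"
  shows "bdd_above ((\<lambda>s. min (A s) (INF r\<in>{s..t}. B r)) ` S)"
  using assms by (intro bdd_image_if_abs_le(1)[where M = M] ballI abs_min_INF_le) auto

lemma abs_sup_min_inf_le:
  assumes "0 \<le> t" "t \<le> T"
  shows "\<bar>sup_min_inf A B t\<bar> \<le> M"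
  unfolding sup_min_inf_def using assms by (intro abs_SUP_le ballI abs_min_INF_le) auto

lemma sup_min_inf_split:
  assumes "0 \<le> p" "p < t" "t \<le> T"
  shows "sup_min_inf A B t =
    max (min (sup_min_inf A B p) (INF r\<in>{p<..t}. B r)) (SUP s\<in>{p<..t}. min (A s) (INF r\<in>{s..t}. B r))"
proof -
  let ?h = "\<lambda>s t. min (A s) (INF r\<in>{s..t}. B r)"
  let ?I = "INF r\<in>{p<..t}. B r"
  have "sup_min_inf A B t = max (SUP s\<in>{0..p}. ?h s t) (SUP s\<in>{p<..t}. ?h s t)"
  proof -
    have "{0..t} = {0..p} \<union> {p<..t}" using assms by auto
    then show ?thesis unfolding sup_min_inf_def using assms
      by (simp only:) (subst cSUP_union, auto intro!: bdd_above_min_INF simp: sup_max)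
  qed
  moreover have "(SUP s\<in>{0..p}. ?h s t) = (SUP s\<in>{0..p}. min (?h s p) ?I)"
  proof (rule SUP_cong)
    fix s assume s: "s \<in> {0..p}"
    then have "{s..t} = {s..p} \<union> {p<..t}" using assms by auto
    then have "(INF r\<in>{s..t}. B r) = min (INF r\<in>{s..p}. B r) ?I"
      using s assms bounded by (simp only:) (subst cINF_union, auto intro!: bdd_image_if_abs_le(2) simp: inf_min)
    then show "?h s t = min (?h s p) ?I" by (simp add: min.assoc)
  qed simp
  moreover have "(SUP s\<in>{0..p}. min (?h s p) ?I) = min (sup_min_inf A B p) ?I"
    unfolding sup_min_inf_def using assms by (intro cSUP_min_const bdd_above_min_INF) auto
  ultimately show ?thesis by simp
qed

lemma sup_min_inf_mono_diff_on:
  assumes "0 \<le> a" "a < b" "b \<le> T"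
    and le: "\<forall>s\<in>{a<..<b}. \<forall>r\<in>{a<..<b}. A s \<le> B r"
  shows "mono_diff_on (sup_min_inf A B) a b"
proof (rule mono_diff_on_max[OF \<open>a < b\<close>])
  let ?P = "\<lambda>t. min (sup_min_inf A B a) (INF r\<in>{a<..t}. B r)"
  let ?Q = "\<lambda>t. SUP s\<in>{a<..t}. A s"
  show "\<forall>t\<in>{a<..<b}. sup_min_inf A B t = max (?P t) (?Q t)"
  proof
    fix t assume t: "t \<in> {a<..<b}"
    have "(SUP s\<in>{a<..t}. min (A s) (INF r\<in>{s..t}. B r)) = ?Q t"
    proof (rule SUP_cong)
      fix s assume "s \<in> {a<..t}"
      then have "A s \<le> (INF r\<in>{s..t}. B r)" using le t by (intro cINF_greatest) auto
      then show "min (A s) (INF r\<in>{s..t}. B r) = A s" by simp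
    qed simp
    then show "sup_min_inf A B t = max (?P t) (?Q t)"
      using sup_min_inf_split[of a t] assms t by simp
  qed
  show "antimono_on {a<..<b} ?P"
  proof (rule monotone_onI)
    fix x y assume "x \<in> {a<..<b}" "y \<in> {a<..<b}" "x \<le> y"
    then have "(INF r\<in>{a<..y}. B r) \<le> (INF r\<in>{a<..x}. B r)"
      using assms bounded by (intro cINF_superset_mono bdd_image_if_abs_le(2)) auto
    then show "?P y \<le> ?P x" by simp
  qed
  show "mono_on {a<..<b} ?Q"
  proof (rule mono_onI)
    fix x y assume "x \<in> {a<..<b}" "y \<in> {a<..<b}" "x \<le> y"
    then show "?Q x \<le> ?Q y"
      using assms bounded by (intro cSUP_subset_mono bdd_image_if_abs_le(1)) auto
  qed
  show "\<forall>t\<in>{a<..<b}. \<bar>?P t\<bar> \<le> M \<and> \<bar>?Q t\<bar> \<le> M"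
  proof
    fix t assume t: "t \<in> {a<..<b}"
    have "\<bar>sup_min_inf A B a\<bar> \<le> M" using abs_sup_min_inf_le assms by simp
    moreover have "\<bar>INF r\<in>{a<..t}. B r\<bar> \<le> M" "\<bar>?Q t\<bar> \<le> M"
      using t assms bounded by (auto intro!: abs_INF_le abs_SUP_le)
    ultimately show "\<bar>?P t\<bar> \<le> M \<and> \<bar>?Q t\<bar> \<le> M" by (auto simp: abs_le_iff)
  qed
qed

end

subsection \<open>Bounded variation of \<open>\<Theta>\<close>\<close>

definition upper_excess :: "(real \<Rightarrow> real) \<Rightarrow> (real \<Rightarrow> real) \<Rightarrow> real \<Rightarrow> real" where
  "upper_excess u f s = max (max (f s - u s) (rlim f s - rlim u s)) 0"

definition lower_margin :: "(real \<Rightarrow> real) \<Rightarrow> (real \<Rightarrow> real) \<Rightarrow> (real \<Rightarrow> real) \<Rightarrow> real \<Rightarrow> real" where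
  "lower_margin l u f r = max (min (f r - l r) (rlim f r - rlim l r)) (f r - u r)"

lemma Theta_eq_sup_min_inf: "Theta u l f = sup_min_inf (upper_excess u f) (lower_margin l u f)"
  by (simp add: fun_eq_iff Theta_def sup_min_inf_def upper_excess_def lower_margin_def)

lemma upper_excess_lower_margin_bounded:
  assumes "regulated f" "regulated l" "regulated u"
  shows "\<exists>M. \<forall>s\<in>{0..T}. \<bar>upper_excess u f s\<bar> \<le> M \<and> \<bar>lower_margin l u f s\<bar> \<le> M"
proof -
  obtain Mf where Mf: "\<forall>x\<in>{0..T}. \<bar>f x\<bar> \<le> Mf \<and> \<bar>rlim f x\<bar> \<le> Mf"
    using regulated_bounded[OF assms(1)] by blast
  obtain Ml where Ml: "\<forall>x\<in>{0..T}. \<bar>l x\<bar> \<le> Ml \<and> \<bar>rlim l x\<bar> \<le> Ml"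
    using regulated_bounded[OF assms(2)] by blast
  obtain Mu where Mu: "\<forall>x\<in>{0..T}. \<bar>u x\<bar> \<le> Mu \<and> \<bar>rlim u x\<bar> \<le> Mu"
    using regulated_bounded[OF assms(3)] by blast
  have "\<bar>upper_excess u f s\<bar> \<le> Mf + Ml + Mu \<and> \<bar>lower_margin l u f s\<bar> \<le> Mf + Ml + Mu"
    if "s \<in> {0..T}" for s
  proof -
    have "\<bar>f s\<bar> \<le> Mf" "\<bar>rlim f s\<bar> \<le> Mf" "\<bar>l s\<bar> \<le> Ml" "\<bar>rlim l s\<bar> \<le> Ml" "\<bar>u s\<bar> \<le> Mu" "\<bar>rlim u s\<bar> \<le> Mu"
      using Mf Ml Mu that by auto
    then show ?thesis unfolding upper_excess_def lower_margin_def by (auto simp: abs_le_iff)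
  qed
  then show ?thesis by blast
qed

lemma uniform_gap:
  assumes "regulated l" "regulated u" "0 < (INF s\<in>{0..t}. u s - l s)"
  shows "\<exists>\<delta>>0. \<forall>x\<in>{0..t}. \<delta> \<le> u x - l x"
proof -
  obtain M where "\<forall>x\<in>{0..t}. \<bar>u x - l x\<bar> \<le> M \<and> \<bar>rlim (\<lambda>t. u t - l t) x\<bar> \<le> M"
    using regulated_bounded[OF regulated_diff[OF assms(2,1)]] by blast
  then have "bdd_below ((\<lambda>s. u s - l s) ` {0..t})" by (intro bdd_image_if_abs_le(2)) auto
  then show ?thesis using assms(3) by (intro exI[of _ "INF s\<in>{0..t}. u s - l s"]) (auto intro: cINF_lower)
qed

lemma upper_excess_le_lower_margin:
  assumes "near_const_on f \<eta> a b" "near_const_on l \<eta> a b" "near_const_on u \<eta> a b"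
    and s: "s \<in> {a<..<b}" and r: "r \<in> {a<..<b}"
    and gap: "6 * \<eta> \<le> u s - l s"
    and above: "l r \<le> f r" "rlim l r \<le> rlim f r"
  shows "upper_excess u f s \<le> lower_margin l u f r"
proof -
  obtain F L U where
    F: "\<forall>x\<in>{a<..<b}. \<bar>f x - F\<bar> \<le> \<eta> \<and> \<bar>rlim f x - F\<bar> \<le> \<eta>" and
    L: "\<forall>x\<in>{a<..<b}. \<bar>l x - L\<bar> \<le> \<eta> \<and> \<bar>rlim l x - L\<bar> \<le> \<eta>" and
    U: "\<forall>x\<in>{a<..<b}. \<bar>u x - U\<bar> \<le> \<eta> \<and> \<bar>rlim u x - U\<bar> \<le> \<eta>"
    using assms(1-3) unfolding near_const_on_def by blast
  have near_s: "\<bar>f s - F\<bar> \<le> \<eta>" "\<bar>rlim f s - F\<bar> \<le> \<eta>" "\<bar>l s - L\<bar> \<le> \<eta>"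
      "\<bar>u s - U\<bar> \<le> \<eta>" "\<bar>rlim u s - U\<bar> \<le> \<eta>"
    using F L U s by auto
  have near_r: "\<bar>f r - F\<bar> \<le> \<eta>" "\<bar>rlim f r - F\<bar> \<le> \<eta>" "\<bar>l r - L\<bar> \<le> \<eta>" "\<bar>rlim l r - L\<bar> \<le> \<eta>"
    using F L r by auto
  have "4 * \<eta> \<le> U - L" using gap near_s by (auto simp: abs_le_iff)
  have margin: "min (f r - l r) (rlim f r - rlim l r) \<le> lower_margin l u f r"
    by (simp add: lower_margin_def)
  show ?thesis
  proof (cases "F + 2 * \<eta> < U")
    case True
    then have "upper_excess u f s = 0"
      using near_s unfolding upper_excess_def by (auto simp: abs_le_iff)
    then show ?thesis using margin above by simp
  next
    case False
    then have "upper_excess u f s \<le> F - U + 2 * \<eta>"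
      using near_s unfolding upper_excess_def by (auto simp: abs_le_iff)
    moreover have "F - L - 2 * \<eta> \<le> min (f r - l r) (rlim f r - rlim l r)"
      using near_r by (auto simp: abs_le_iff)
    ultimately show ?thesis using margin \<open>4 * \<eta> \<le> U - L\<close> by linarith
  qed
qed

theorem Theta_bounded_variation:
  assumes "regulated f" "regulated l" "regulated u"
    and above: "\<forall>t\<ge>0. l t \<le> f t \<and> rlim l t \<le> rlim f t"
    and gap: "\<forall>t\<ge>0. (INF s\<in>{0..t}. u s - l s) > 0"
  shows "bounded_variation (Theta u l f)"
  unfolding bounded_variation_def
proof (intro allI impI)
  fix T :: real assume "0 \<le> T"
  obtain M where M: "\<forall>s\<in>{0..T + 1}. \<bar>upper_excess u f s\<bar> \<le> M \<and> \<bar>lower_margin l u f s\<bar> \<le> M"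
    using upper_excess_lower_margin_bounded assms(1-3) by blast
  obtain \<delta> where \<delta>: "\<delta> > 0" "\<forall>x\<in>{0..T + 1}. \<delta> \<le> u x - l x"
    using uniform_gap[OF assms(2,3), of "T + 1"] gap \<open>0 \<le> T\<close> by auto
  define G where "G a b \<longleftrightarrow> (\<forall>g\<in>{f, l, u}. near_const_on g (\<delta> / 6) a b)" for a b
  have "mono_diff_on (sup_min_inf (upper_excess u f) (lower_margin l u f)) 0 T"
  proof (rule mono_diff_on_from_windows[OF \<open>0 \<le> T\<close>, of G])
    fix a b assume "0 \<le> a" "a < b" "b \<le> T + 1" "G a b"
    then show "mono_diff_on (sup_min_inf (upper_excess u f) (lower_margin l u f)) a b"
      using \<delta> above
      by (intro sup_min_inf_mono_diff_on[OF M] ballI upper_excess_le_lower_margin[of _ "\<delta> / 6" a b])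
        (auto simp: G_def)
  next
    fix a b a' b' assume "G a b" "a \<le> a'" "b' \<le> b"
    then show "G a' b'" unfolding G_def by (blast intro: near_const_on_subset)
  next
    fix c :: real assume "0 \<le> c"
    then obtain d where "d > 0" "\<forall>g\<in>{f, l, u}.
        near_const_on g (\<delta> / 6) (max 0 (c - d)) c \<and> near_const_on g (\<delta> / 6) c (c + d)"
      using regulated_near_const_finite[of "{f, l, u}" c "\<delta> / 6"] assms(1-3) \<delta>(1) by auto
    then show "\<exists>d>0. G (max 0 (c - d)) c \<and> G c (c + d)" unfolding G_def by blast
  qed
  then show "bv_on (Theta u l f) 0 T"
    unfolding Theta_eq_sup_min_inf by (rule bv_on_if_mono_diff_on)
qed

theorem lemma2:
  fixes y l u :: "real \<Rightarrow> real"
  assumes "regulated y" and "regulated l" and "regulated u"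
    and "\<forall>t\<ge>0. l t \<le> u t"
    and "l 0 \<le> y 0" and "y 0 \<le> u 0"
    and "\<forall>t\<ge>0. (INF s\<in>{0..t}. u s - l s) > 0"
  shows "bounded_variation (Theta u l (RP_xi l y))"
proof (rule Theta_bounded_variation)
  show "regulated (RP_xi l y)" using regulated_RP_xi assms(1,2) .
  show "\<forall>t\<ge>0. l t \<le> RP_xi l y t \<and> rlim l t \<le> rlim (RP_xi l y) t"
    using RP_xi_ge_barrier rlim_RP_xi_ge_barrier assms(1,2) by blast
qed (use assms(2,3,7) in auto)

end
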